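(* Let $\mathcal{P}\subseteq[0,1]^n$ be a polytope with vertex set $V$. For each $v\in V$ let $P_v$ be a non-zero Bernstein polynomial in $n$ variables, and suppose that $$\sum_{v\in V}P_v(x)(v-x)=0\quad\text{for all }x\in\mathcal{P}.$$ Then the Bernoulli race over the Bernstein polynomials $\{P_v\}_{v\in V}$ is a Bernoulli factory for $\mathcal{P}$. If moreover $\sum_{v\in V}P_v(x)>0$ for all $x\in\mathcal{P}$, then it is a strong Bernoulli factory for $\mathcal{P}$.
   Context: A Bernstein monomial is $\prod_{i=1}^n x_i^{a_i}(1-x_i)^{b_i}$ with nonnegative integers $a_i,b_i$; a Bernstein polynomial is a finite combination $\sum_j c_jM_j(x)$ of Bernstein monomials with positive coefficients $c_j$. A Bernoulli factory with output set $V$ (for inputs $x\in[0,1]^n$) is a (possibly infinite) rooted binary tree whose internal nodes are labeled by an index $i\in[n]$ or a known constant $c\in(0,1)$ and whose leaves are labeled by elements of $V$; on input $x$ one walks from the root, at a node labeled $i$ flipping a fresh independent coin that is $1$ with probability $x_i$ (an $x_i$-coin), at a node labeled $c$ a fresh coin of bias $c$, following the edge labeled by the outcome, and outputs the label of the leaf reached; $\mathcal{F}(x)$ is the output ($\emptyset$ if no leaf is reached). Vertices are viewed as vectors in $\mathbb{R}^n$. A Bernoulli factory for $\mathcal{P}$ is such a factory with output set $V$ that terminates almost surely (i.e. $\Pr[\mathcal{F}(x)=\emptyset]=0$) and satisfies $\mathbb{E}[\mathcal{F}(x)]=x$ for all $x\in\mathcal{P}\cap(0,1)^n$; it is a strong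 Bernoulli factory for $\mathcal{P}$ if it terminates almost surely and satisfies $\mathbb{E}[\mathcal{F}(x)]=x$ for all $x\in\mathcal{P}$. The Bernoulli race over Bernstein polynomials $\{P_v\}_{v\in V}$ is the following factory: fix a constant $C\ge1$ at least the sum of the coefficients of every $P_v$. In each round, pick $v\in V$ uniformly at random; writing $P_v=\sum_j c_jM_j$, select monomial $M_j$ with probability $c_j/C$ (with the remaining probability select none, which counts as failure); if $M_j=\prod_i x_i^{a_i}(1-x_i)^{b_i}$ is selected, flip the $x_i$-coin $a_i+b_i$ times for each $i$, and declare success iff for every $i$ the first $a_i$ flips are $1$ and the next $b_i$ flips are $0$. On success output $v$; otherwise start a new round. *)

theory Defs
  imports "HOL-Analysis.Analysis" "HOL-Probability.Probability"
begin

text \<open>Bernstein monomials over the variables indexed by the finite type 'n: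
  a pair (a, b) of exponent vectors, representing prod_i x_i^(a i) (1 - x_i)^(b i).\<close>
type_synonym 'n bmono = "('n \<Rightarrow> nat) \<times> ('n \<Rightarrow> nat)"

type_synonym 'n bpoly = "(real \<times> 'n bmono) list"

definition bernstein_poly :: "'n bpoly \<Rightarrow> bool" where
  "bernstein_poly p \<longleftrightarrow> (\<forall>(c, m) \<in> set p. c > 0)"

definition mono_eval :: "'n::finite bmono \<Rightarrow> real^'n \<Rightarrow> real" where
  "mono_eval m x = (\<Prod>i\<in>UNIV. (x$i) ^ (fst m i) * (1 - x$i) ^ (snd m i))"

definition bpoly_eval :: "'n::finite bpoly \<Rightarrow> real^'n \<Rightarrow> real" where
  "bpoly_eval p x = (\<Sum>(c, m) \<leftarrow> p. c * mono_eval m x)"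

definition coef_sum :: "'n bpoly \<Rightarrow> real" where
  "coef_sum p = (\<Sum>(c, m) \<leftarrow> p. c)"

fun flips :: "real \<Rightarrow> nat \<Rightarrow> bool list pmf" where
  "flips q 0 = return_pmf []"
| "flips q (Suc k) = bind_pmf (bernoulli_pmf q) (\<lambda>b. map_pmf (\<lambda>bs. b # bs) (flips q k))"

definition mono_trial :: "'n::finite bmono \<Rightarrow> real^'n \<Rightarrow> bool pmf" where
  "mono_trial m x =
     map_pmf (\<lambda>f. \<forall>i. take (fst m i) (f i) = replicate (fst m i) True
                    \<and> drop (fst m i) (f i) = replicate (snd m i) False)
       (Pi_pmf UNIV [] (\<lambda>i. flips (x$i) (fst m i + snd m i)))"

definition select_mono :: "'n bpoly \<Rightarrow> real \<Rightarrow> nat option pmf" where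
  "select_mono p C = embed_pmf (\<lambda>r. case r of
       None \<Rightarrow> 1 - coef_sum p / C
     | Some j \<Rightarrow> (if j < length p then fst (p ! j) / C else 0))"

definition race_round ::
  "(real^'n) set \<Rightarrow> (real^'n \<Rightarrow> 'n::finite bpoly) \<Rightarrow> real \<Rightarrow> real^'n \<Rightarrow> (real^'n) option pmf" where
  "race_round V P C x = bind_pmf (pmf_of_set V) (\<lambda>v.
     bind_pmf (select_mono (P v) C) (\<lambda>j. case j of
        None \<Rightarrow> return_pmf None
      | Some k \<Rightarrow> map_pmf (\<lambda>s. if s then Some v else None) (mono_trial (snd (P v ! k)) x)))"

text \<open>Output of the first successful round (None = never terminates).\<close>
definition first_success :: "'a option stream \<Rightarrow> 'a option" where
  "first_success \<omega> = (if \<exists>i. \<omega> !! i \<noteq> None then \<omega> !! (LEAST i. \<omega> !! i \<noteq> None) else None)"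

definition bernoulli_race ::
  "(real^'n) set \<Rightarrow> (real^'n \<Rightarrow> 'n::finite bpoly) \<Rightarrow> real \<Rightarrow> real^'n \<Rightarrow> (real^'n) option measure" where
  "bernoulli_race V P C x =
     distr (stream_space (measure_pmf (race_round V P C x))) (count_space UNIV) first_success"

definition factory_at :: "(real^'n) set \<Rightarrow> (real^'n) option measure \<Rightarrow> real^'n \<Rightarrow> bool" where
  "factory_at V M x \<longleftrightarrow> measure M {None} = 0 \<and> (\<Sum>v\<in>V. measure M {Some v} *\<^sub>R v) = x"

definition open_cube :: "(real^'n) set" where
  "open_cube = {x. \<forall>i. 0 < x$i \<and> x$i < 1}"

definition unit_cube :: "(real^'n) set" where
  "unit_cube = {x. \<forall>i. 0 \<le> x$i \<and> x$i \<le> 1}"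

definition bernoulli_factory ::
  "(real^'n) set \<Rightarrow> (real^'n) set \<Rightarrow> (real^'n \<Rightarrow> (real^'n) option measure) \<Rightarrow> bool" where
  "bernoulli_factory Q V F \<longleftrightarrow> (\<forall>x \<in> Q \<inter> open_cube. factory_at V (F x) x)"

definition strong_bernoulli_factory ::
  "(real^'n) set \<Rightarrow> (real^'n) set \<Rightarrow> (real^'n \<Rightarrow> (real^'n) option measure) \<Rightarrow> bool" where
  "strong_bernoulli_factory Q V F \<longleftrightarrow> (\<forall>x \<in> Q. factory_at V (F x) x)"

end

theory Submission
  imports Defs
begin

text \<open>
  A single round of the race picks the vertex v with probability 1/|V|, a monomial M with
  probability c/C, and then succeeds with probability exactly M(x); hence it outputs v with
  probability P_v(x)/(|V| C). Since the rounds are independent, the output of the race is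
  distributed as the output of one round conditioned on success, i.e. it is v with probability
  P_v(x) / (sum_w P_w(x)), provided this denominator is positive. The balancing identity says
  precisely that the mean of this distribution is x. On the open cube every non-zero Bernstein
  polynomial is positive, so the denominator is positive there; on the boundary of the polytope
  this is the additional hypothesis of the strong version.
\<close>

lemma pmf_map_Cons: "pmf (map_pmf ((#) b) M) (c # l) = (if b = c then pmf M l else 0)"
proof (cases "b = c")
  case True
  then show ?thesis using pmf_map_inj'[of "(#) b" M l] by (simp add: inj_def)
next
  case False
  then have "c # l \<notin> set_pmf (map_pmf ((#) b) M)" by auto
  with False show ?thesis by (simp add: pmf_eq_0_set_pmf)
qed

lemma pmf_flips_Suc_Cons:
  assumes "0 \<le> q" "q \<le> 1"
  shows "pmf (flips q (Suc k)) (c # l) = (if c then q else 1 - q) * pmf (flips q k) l"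
  using assms by (simp add: pmf_bind pmf_map_Cons)

lemma pmf_flips_pattern:
  assumes "0 \<le> q" "q \<le> 1"
  shows "pmf (flips q (a + b)) (replicate a True @ replicate b False) = q ^ a * (1 - q) ^ b"
proof (induction a)
  case 0
  show ?case by (induction b) (simp_all add: pmf_flips_Suc_Cons[OF assms] del: flips.simps(2))
next
  case (Suc a)
  then show ?case by (simp add: pmf_flips_Suc_Cons[OF assms] del: flips.simps(2))
qed

lemma measure_flips_pattern:
  assumes "0 \<le> q" "q \<le> 1"
  shows "measure_pmf.prob (flips q (a + b))
           {l. take a l = replicate a True \<and> drop a l = replicate b False}
         = q ^ a * (1 - q) ^ b"
proof -
  have "{l. take a l = replicate a True \<and> drop a l = replicate b False}
      = {replicate a True @ replicate b False}"
    by (auto, metis append_take_drop_id)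
  then show ?thesis by (simp add: measure_pmf_single pmf_flips_pattern assms)
qed

lemma pmf_mono_trial:
  assumes "x \<in> unit_cube"
  shows "pmf (mono_trial m x) True = mono_eval m x"
proof -
  define E where "E i = {l. take (fst m i) l = replicate (fst m i) True
                          \<and> drop (fst m i) l = replicate (snd m i) False}" for i
  have "pmf (mono_trial m x) True
      = measure_pmf.prob (Pi_pmf UNIV [] (\<lambda>i. flips (x$i) (fst m i + snd m i))) (PiE_dflt UNIV [] E)"
    unfolding mono_trial_def pmf_map by (rule arg_cong) (auto simp: PiE_dflt_def E_def)
  also have "\<dots> = (\<Prod>i\<in>UNIV. measure_pmf.prob (flips (x$i) (fst m i + snd m i)) (E i))"
    by (rule measure_Pi_pmf_PiE_dflt) simp
  also have "\<dots> = mono_eval m x"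
    unfolding mono_eval_def E_def
    using assms by (intro prod.cong refl measure_flips_pattern) (auto simp: unit_cube_def)
  finally show ?thesis .
qed

lemma bernstein_poly_coeff_pos:
  "bernstein_poly p \<Longrightarrow> j < length p \<Longrightarrow> fst (p ! j) > 0"
  unfolding bernstein_poly_def by (metis case_prod_beta nth_mem)

lemma coef_sum_conv_nth: "coef_sum p = (\<Sum>j<length p. fst (p ! j))"
  unfolding coef_sum_def by (simp add: case_prod_beta sum_list_sum_nth atLeast0LessThan)

lemma bpoly_eval_conv_nth:
  "bpoly_eval p x = (\<Sum>j<length p. fst (p ! j) * mono_eval (snd (p ! j)) x)"
  unfolding bpoly_eval_def by (simp add: case_prod_beta sum_list_sum_nth atLeast0LessThan)

lemma mono_eval_pos: "x \<in> open_cube \<Longrightarrow> mono_eval m x > 0"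
  unfolding mono_eval_def open_cube_def by (intro prod_pos) auto

lemma bpoly_eval_pos:
  assumes "bernstein_poly p" "p \<noteq> []" "x \<in> open_cube"
  shows "bpoly_eval p x > 0"
  unfolding bpoly_eval_conv_nth using assms
  by (intro sum_pos) (auto intro: mult_pos_pos bernstein_poly_coeff_pos mono_eval_pos)

lemma pmf_select_mono:
  assumes "bernstein_poly p" "coef_sum p \<le> C" "C \<ge> 1"
  shows "pmf (select_mono p C) r = (case r of
       None \<Rightarrow> 1 - coef_sum p / C
     | Some j \<Rightarrow> (if j < length p then fst (p ! j) / C else 0))"
  unfolding select_mono_def
proof (rule pmf_embed_pmf)
  let ?f = "\<lambda>r. case r of None \<Rightarrow> 1 - coef_sum p / C
     | Some j \<Rightarrow> (if j < length p then fst (p ! j) / C else 0)"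
  let ?S = "insert None (Some ` {..<length p})"
  show nonneg: "0 \<le> ?f r" for r
    using assms bernstein_poly_coeff_pos[OF assms(1)]
    by (auto split: option.splits intro: less_imp_le)
  have "(\<integral>\<^sup>+r. ennreal (?f r) \<partial>count_space UNIV) = (\<Sum>r\<in>?S. ennreal (?f r))"
    by (rule nn_integral_count_space') (auto split: option.splits)
  also have "\<dots> = ennreal (\<Sum>r\<in>?S. ?f r)"
    using nonneg by (intro sum_ennreal) auto
  also have "(\<Sum>r\<in>?S. ?f r) = 1 - coef_sum p / C + (\<Sum>j<length p. fst (p ! j) / C)"
    by (subst sum.insert) (auto simp: sum.reindex)
  also have "\<dots> = 1"
    using assms(3) by (simp add: coef_sum_conv_nth sum_divide_distrib)
  finally show "(\<integral>\<^sup>+r. ennreal (?f r) \<partial>count_space UNIV) = 1" by simp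
qed

lemma integral_select_mono:
  assumes "bernstein_poly p" "coef_sum p \<le> C" "C \<ge> 1"
  shows "measure_pmf.expectation (select_mono p C) f
       = (1 - coef_sum p / C) * f None + (\<Sum>j<length p. fst (p ! j) / C * f (Some j))"
proof -
  let ?S = "insert None (Some ` {..<length p})"
  have "measure_pmf.expectation (select_mono p C) f = (\<Sum>r\<in>?S. f r * pmf (select_mono p C) r)"
  proof (rule integral_measure_pmf_real)
    fix r assume "r \<in> set_pmf (select_mono p C)"
    then show "r \<in> ?S"
      by (cases r) (auto simp: set_pmf_iff pmf_select_mono[OF assms] split: if_splits)
  qed simp
  also have "\<dots> = (1 - coef_sum p / C) * f None + (\<Sum>j<length p. fst (p ! j) / C * f (Some j))"
    by (subst sum.insert) (auto simp: sum.reindex pmf_select_mono[OF assms] mult.commute)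
  finally show ?thesis .
qed

definition vertex_trial :: "'n::finite bpoly \<Rightarrow> real \<Rightarrow> real^'n \<Rightarrow> 'a \<Rightarrow> 'a option pmf"
  where
  "vertex_trial p C x v = bind_pmf (select_mono p C) (\<lambda>j. case j of
        None \<Rightarrow> return_pmf None
      | Some k \<Rightarrow> map_pmf (\<lambda>s. if s then Some v else None) (mono_trial (snd (p ! k)) x))"

lemma race_round_conv_vertex_trial:
  "race_round V P C x = bind_pmf (pmf_of_set V) (\<lambda>v. vertex_trial (P v) C x v)"
  unfolding race_round_def vertex_trial_def ..

lemma set_vertex_trial: "set_pmf (vertex_trial p C x v) \<subseteq> {None, Some v}"
  by (auto simp: vertex_trial_def split: option.splits)

lemma pmf_vertex_trial:
  assumes "x \<in> unit_cube" "bernstein_poly p" "coef_sum p \<le> C" "C \<ge> 1"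
  shows "pmf (vertex_trial p C x v) (Some v) = bpoly_eval p x / C"
proof -
  have "inj (\<lambda>s. if s then Some v else None)" by (auto simp: inj_def split: if_splits)
  from pmf_map_inj'[OF this, of _ True] have trial:
    "pmf (map_pmf (\<lambda>s. if s then Some v else None) (mono_trial m x)) (Some v) = mono_eval m x" for m
    by (simp add: pmf_mono_trial[OF assms(1)])
  show ?thesis
    unfolding vertex_trial_def pmf_bind integral_select_mono[OF assms(2-4)]
    by (simp add: trial bpoly_eval_conv_nth sum_divide_distrib)
qed

lemma set_race_round:
  assumes "finite V" "V \<noteq> {}"
  shows "set_pmf (race_round V P C x) \<subseteq> insert None (Some ` V)"
proof -
  have "set_pmf (race_round V P C x) = (\<Union>w\<in>V. set_pmf (vertex_trial (P w) C x w))"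
    using assms by (simp add: race_round_conv_vertex_trial set_bind_pmf)
  with set_vertex_trial show ?thesis by fastforce
qed

lemma pmf_race_round:
  assumes "finite V" "V \<noteq> {}" "v \<in> V" "x \<in> unit_cube"
    and "bernstein_poly (P v)" "coef_sum (P v) \<le> C" "C \<ge> 1"
  shows "pmf (race_round V P C x) (Some v) = bpoly_eval (P v) x / (real (card V) * C)"
proof -
  have only_v: "pmf (vertex_trial (P w) C x w) (Some v) = (if w = v then bpoly_eval (P v) x / C else 0)"
    for w
    using set_vertex_trial[of "P w" C x w] pmf_vertex_trial[OF assms(4-7)]
    by (auto simp: pmf_eq_0_set_pmf)
  have "pmf (race_round V P C x) (Some v)
      = (\<Sum>w\<in>V. pmf (vertex_trial (P w) C x w) (Some v)) / real (card V)"
    unfolding race_round_conv_vertex_trial using assms(2,1) by (rule pmf_bind_pmf_of_set)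
  also have "(\<Sum>w\<in>V. pmf (vertex_trial (P w) C x w) (Some v)) = bpoly_eval (P v) x / C"
    unfolding only_v using assms(1,3) by simp
  finally show ?thesis by simp
qed

lemma first_success_SCons:
  "first_success (t ## \<omega>) = (case t of None \<Rightarrow> first_success \<omega> | Some a \<Rightarrow> Some a)"
proof (cases t)
  case None
  have ex: "(\<exists>i. (t ## \<omega>) !! i \<noteq> None) \<longleftrightarrow> (\<exists>i. \<omega> !! i \<noteq> None)"
    using None by (metis not0_implies_Suc snth.simps(1) snth_Stream stream.sel(1))
  show ?thesis
  proof (cases "\<exists>i. \<omega> !! i \<noteq> None")
    case True
    then obtain i where "\<omega> !! i \<noteq> None" by blast
    with None have "(LEAST i. (t ## \<omega>) !! i \<noteq> None) = Suc (LEAST i. \<omega> !! i \<noteq> None)"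
      by (subst Least_Suc[of _ "Suc i"]) simp_all
    then show ?thesis using True ex None unfolding first_success_def by simp
  next
    case False
    then show ?thesis using ex None unfolding first_success_def by simp
  qed
next
  case (Some a)
  then have head: "(t ## \<omega>) !! 0 \<noteq> None" by simp
  then have "\<exists>i. (t ## \<omega>) !! i \<noteq> None" by blast
  moreover from head have "(LEAST i. (t ## \<omega>) !! i \<noteq> None) = 0" by (rule Least_eq_0)
  ultimately show ?thesis using Some unfolding first_success_def by simp
qed

lemma measurable_snth_count_space:
  "(\<lambda>\<omega>. \<omega> !! i) \<in> stream_space (measure_pmf p) \<rightarrow>\<^sub>M count_space UNIV"
  using measurable_snth[of i "measure_pmf p"]
  by (simp add: measurable_cong_sets[OF refl sets_measure_pmf_count_space])

lemma measurable_first_success: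
  "first_success \<in> stream_space (measure_pmf p) \<rightarrow>\<^sub>M count_space UNIV"
proof -
  note measurable_snth_count_space[measurable]
  have "(\<lambda>\<omega>. LEAST i. \<omega> !! i \<noteq> None) \<in> stream_space (measure_pmf p) \<rightarrow>\<^sub>M count_space UNIV"
    by measurable
  then have "(\<lambda>\<omega>. \<omega> !! (LEAST i. \<omega> !! i \<noteq> None))
      \<in> stream_space (measure_pmf p) \<rightarrow>\<^sub>M count_space UNIV"
    by (rule measurable_compose_countable[OF measurable_snth_count_space])
  then show ?thesis
    unfolding first_success_def[abs_def] by measurable
qed

lemma measure_first_success_recurrence:
  fixes p :: "'a option pmf" and A :: "'a option set"
  defines "S \<equiv> stream_space (measure_pmf p)"
  defines "F \<equiv> measure S {\<omega>\<in>space S. first_success \<omega> \<in> A}"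
  shows "F = measure_pmf.prob p (A - {None}) + F * pmf p None"
proof -
  interpret S: prob_space S
    unfolding S_def by (rule prob_space.prob_space_stream_space[OF prob_space_measure_pmf])
  have "first_success -` A \<inter> space S \<in> sets S"
    unfolding S_def by (rule measurable_sets[OF measurable_first_success]) simp
  then have "{\<omega>\<in>space S. first_success \<omega> \<in> A} \<in> sets S"
    by (simp add: Int_def conj_commute)
  then have "ennreal F = (\<integral>\<^sup>+t. ennreal (measure S {\<omega>\<in>space S. first_success (t ## \<omega>) \<in> A}) \<partial>p)"
    unfolding F_def S_def by (rule prob_space.prob_stream_space[OF prob_space_measure_pmf])
  also have "\<dots> = (\<integral>\<^sup>+t. ennreal (indicator (A - {None}) t) + ennreal F * indicator {None} t \<partial>p)"
  proof (rule nn_integral_cong)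
    fix t :: "'a option"
    show "ennreal (measure S {\<omega>\<in>space S. first_success (t ## \<omega>) \<in> A})
       = ennreal (indicator (A - {None}) t) + ennreal F * indicator {None} t"
      by (cases t; cases "t \<in> A") (simp_all add: first_success_SCons F_def S.prob_space)
  qed
  also have "\<dots> = emeasure p (A - {None}) + ennreal F * emeasure p {None}"
    by (simp add: nn_integral_add nn_integral_cmult_indicator ennreal_indicator)
  also have "\<dots> = ennreal (measure_pmf.prob p (A - {None}) + F * pmf p None)"
    by (simp add: measure_pmf.emeasure_eq_measure measure_pmf_single ennreal_mult ennreal_plus F_def)
  finally show ?thesis
    by (subst (asm) ennreal_inj) (auto simp: F_def)
qed

lemma measure_distr_first_success:
  fixes p :: "'a option pmf"
  assumes "pmf p None < 1"
  shows "measure (distr (stream_space (measure_pmf p)) (count_space UNIV) first_success) A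
       = measure_pmf.prob p (A - {None}) / (1 - pmf p None)"
proof -
  let ?S = "stream_space (measure_pmf p)"
  have "measure (distr ?S (count_space UNIV) first_success) A
      = measure ?S {\<omega>\<in>space ?S. first_success \<omega> \<in> A}"
    by (subst measure_distr[OF measurable_first_success]) (auto intro!: arg_cong[where f = "measure ?S"])
  with measure_first_success_recurrence[of p A] assms show ?thesis
    by (simp add: field_simps)
qed

lemma factory_at_bernoulli_race:
  fixes V :: "(real^'n::finite) set" and P :: "real^'n \<Rightarrow> 'n bpoly"
  assumes "finite V" "V \<noteq> {}" "x \<in> unit_cube" "C \<ge> 1"
    and "\<forall>v\<in>V. bernstein_poly (P v) \<and> coef_sum (P v) \<le> C"
    and balance: "(\<Sum>v\<in>V. bpoly_eval (P v) x *\<^sub>R (v - x)) = 0"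
    and pos: "(\<Sum>v\<in>V. bpoly_eval (P v) x) > 0"
  shows "factory_at V (bernoulli_race V P C x) x"
proof -
  define p where "p = race_round V P C x"
  define s where "s = (\<Sum>v\<in>V. bpoly_eval (P v) x)"
  define D where "D = real (card V) * C"
  have "D > 0" unfolding D_def using assms(1,2,4) by (simp add: card_gt_0_iff)
  have pmf_success: "pmf p (Some v) = bpoly_eval (P v) x / D" if "v \<in> V" for v
    unfolding p_def D_def using pmf_race_round assms(1-5) that by blast
  have success: "1 - pmf p None = s / D"
  proof -
    have "1 = (\<Sum>r\<in>insert None (Some ` V). pmf p r)"
      unfolding p_def using assms(1,2)
      by (intro sum_pmf_eq_1[symmetric] set_race_round finite.insertI finite_imageI)
    also have "\<dots> = pmf p None + (\<Sum>v\<in>V. pmf p (Some v))"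
      using assms(1) by (subst sum.insert) (auto simp: sum.reindex)
    finally show ?thesis
      using pmf_success by (simp add: s_def sum_divide_distrib)
  qed
  have law: "measure (bernoulli_race V P C x) A = measure_pmf.prob p (A - {None}) / (s / D)" for A
  proof -
    have "0 < s / D" using pos \<open>D > 0\<close> by (simp add: s_def)
    then have "pmf p None < 1" using success by linarith
    then show ?thesis
      unfolding bernoulli_race_def p_def[symmetric] success[symmetric]
      by (rule measure_distr_first_success)
  qed
  have "(\<Sum>v\<in>V. bpoly_eval (P v) x *\<^sub>R v) = s *\<^sub>R x"
    using balance by (simp add: s_def scaleR_diff_right sum_subtractf scaleR_sum_left)
  moreover have "(\<Sum>v\<in>V. (bpoly_eval (P v) x / s) *\<^sub>R v)
      = inverse s *\<^sub>R (\<Sum>v\<in>V. bpoly_eval (P v) x *\<^sub>R v)"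
    by (simp add: scaleR_sum_right divide_inverse_commute)
  ultimately have "(\<Sum>v\<in>V. (bpoly_eval (P v) x / s) *\<^sub>R v) = x"
    using pos by (simp add: s_def)
  then show ?thesis
    unfolding factory_at_def using law[of "{None}"] law[of "{Some _}"] pmf_success \<open>D > 0\<close>
    by (simp add: measure_pmf_single)
qed

theorem theorem2p8:
  fixes Q V :: "(real^'n::finite) set" and P :: "real^'n \<Rightarrow> 'n bpoly" and C :: real
  assumes "polytope Q" and "Q \<subseteq> unit_cube"
    and "V = {v. v extreme_point_of Q}"
    and "\<forall>v\<in>V. bernstein_poly (P v) \<and> P v \<noteq> []"
    and "\<forall>x\<in>Q. (\<Sum>v\<in>V. bpoly_eval (P v) x *\<^sub>R (v - x)) = 0"
    and "C \<ge> 1" and "\<forall>v\<in>V. coef_sum (P v) \<le> C"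
  shows "bernoulli_factory Q V (bernoulli_race V P C) \<and>
         ((\<forall>x\<in>Q. (\<Sum>v\<in>V. bpoly_eval (P v) x) > 0)
           \<longrightarrow> strong_bernoulli_factory Q V (bernoulli_race V P C))"
proof -
  have "finite V"
    unfolding assms(3) using assms(1) by (intro finite_polyhedron_extreme_points polytope_imp_polyhedron)
  have "Q = convex hull V"
    unfolding assms(3) using assms(1)
    by (intro Krein_Milman_Minkowski polytope_imp_compact polytope_imp_convex)
  then have nonempty: "V \<noteq> {}" if "x \<in> Q" for x
    using that by auto
  have factory: "factory_at V (bernoulli_race V P C x) x"
    if "x \<in> Q" "(\<Sum>v\<in>V. bpoly_eval (P v) x) > 0" for x
    using \<open>finite V\<close> nonempty assms that by (intro factory_at_bernoulli_race) auto
  have "(\<Sum>v\<in>V. bpoly_eval (P v) x) > 0" if "x \<in> Q \<inter> open_cube" for x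
    using \<open>finite V\<close> nonempty that assms(4) bpoly_eval_pos by (intro sum_pos) auto
  then show ?thesis
    unfolding bernoulli_factory_def strong_bernoulli_factory_def using factory by blast
qed

end
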